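(* Let $z,x,y\in[0,1]$ with $z=x+y$, and let $z=(z_0.z_1z_2\ldots)_2$, $x=(x_0.x_1x_2\ldots)_2$, $y=(y_0.y_1y_2\ldots)_2$ be concise binary expansions. Let $\ell\ge0$ be an index. If $x_\ell y_\ell z_\ell\in\{000,011,101,110\}$ and $z_j=0$ for all $j>\ell$, then $x_j=y_j=0$ for all $j>\ell$.
   Context: A concise binary expansion of a real number is a binary representation $(z_0.z_1z_2\ldots)_2=\sum_{i\ge0}z_i2^{-i}$ with $z_i\in\{0,1\}$ that does not end in an infinite string of 1s. $x_\ell y_\ell z_\ell$ denotes the concatenation of the three bits. *)

theory Defs
  imports "HOL-Analysis.Analysis"
begin

definition concise_binary_expansion :: "(nat \<Rightarrow> nat) \<Rightarrow> real \<Rightarrow> bool" where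
  "concise_binary_expansion z r \<longleftrightarrow>
     (\<forall>i. z i \<in> {0, 1}) \<and>
     (\<lambda>i. real (z i) / 2 ^ i) sums r \<and>
     \<not> (\<exists>N. \<forall>j\<ge>N. z j = 1)"

end

theory Submission
  imports Defs
begin

text \<open>Let \<open>X\<close>, \<open>Y\<close>, \<open>Z\<close> be the integers whose binary digits are the first \<open>l + 1\<close> digits of
  \<open>x\<close>, \<open>y\<close>, \<open>z\<close>. Conciseness makes them the floors of \<open>2^l x\<close>, \<open>2^l y\<close>, \<open>2^l z\<close>, and the
  vanishing tail of \<open>z\<close> gives \<open>Z = 2^l z\<close>. Hence \<open>Z - X - Y\<close> is the sum of the fractional
  parts of \<open>2^l x\<close> and \<open>2^l y\<close>, an integer in \<open>[0, 2)\<close>. The digit condition says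
  \<open>x\<^sub>l + y\<^sub>l \<equiv> z\<^sub>l (mod 2)\<close>, so this integer is even, hence 0; both fractional parts vanish,
  and so do the tails of \<open>x\<close> and \<open>y\<close>.\<close>

fun binary_prefix :: "(nat \<Rightarrow> nat) \<Rightarrow> nat \<Rightarrow> nat" where
  "binary_prefix d 0 = d 0"
| "binary_prefix d (Suc n) = 2 * binary_prefix d n + d (Suc n)"

lemma even_binary_prefix_iff: "even (binary_prefix d n) \<longleftrightarrow> even (d n)"
  by (cases n) auto

lemma sum_binary_digits_eq_binary_prefix:
  "(\<Sum>i<Suc n. real (d i) / 2 ^ i) = real (binary_prefix d n) / 2 ^ n"
  by (induction n) (simp_all add: field_simps)

lemma sums_less:
  fixes f g :: "nat \<Rightarrow> real"
  assumes "\<And>n. f n \<le> g n" and "f i < g i" and "f sums s" and "g sums t"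
  shows "s < t"
proof -
  have "(\<lambda>n. g n - f n) sums (t - s)"
    using assms(3,4) by (rule sums_diff[rotated])
  moreover have "0 < (\<Sum>n. g n - f n)"
    using assms(1,2) calculation by (intro suminf_pos2[where i = i]) (auto simp: sums_iff)
  ultimately show ?thesis
    by (simp add: sums_iff)
qed

lemma concise_binary_expansion_scaled_tail_sums:
  assumes "concise_binary_expansion d r"
  shows "(\<lambda>i. real (d (i + Suc n)) / 2 ^ Suc i) sums (2 ^ n * r - real (binary_prefix d n))"
proof -
  have "(\<lambda>i. real (d i) / 2 ^ i) sums r"
    using assms unfolding concise_binary_expansion_def by blast
  then have "(\<lambda>i. real (d (i + Suc n)) / 2 ^ (i + Suc n)) sums (r - real (binary_prefix d n) / 2 ^ n)"
    unfolding sum_binary_digits_eq_binary_prefix[symmetric] by (rule sums_iff_shift'[THEN iffD2])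
  then have "(\<lambda>i. 2 ^ n * (real (d (i + Suc n)) / 2 ^ (i + Suc n)))
      sums (2 ^ n * (r - real (binary_prefix d n) / 2 ^ n))"
    by (rule sums_mult)
  then show ?thesis
    by (simp add: power_add right_diff_distrib)
qed

lemma concise_binary_expansion_binary_prefix_bounds:
  assumes "concise_binary_expansion d r"
  shows "real (binary_prefix d n) \<le> 2 ^ n * r" and "2 ^ n * r < real (binary_prefix d n) + 1"
proof -
  let ?tail = "\<lambda>i. real (d (i + Suc n)) / 2 ^ Suc i"
  have tail: "?tail sums (2 ^ n * r - real (binary_prefix d n))"
    using assms by (rule concise_binary_expansion_scaled_tail_sums)
  show "real (binary_prefix d n) \<le> 2 ^ n * r"
    using sums_le[OF _ sums_zero tail] by simp
  have "d i \<in> {0, 1}" for i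
    using assms unfolding concise_binary_expansion_def by blast
  then have digit_le_1: "d i \<le> 1" for i
    by (metis insertE empty_iff order_refl zero_le)
  obtain j where "j \<ge> Suc n" and "d j \<noteq> 1"
    using assms unfolding concise_binary_expansion_def by blast
  moreover from this have "d j = 0"
    using digit_le_1[of j] by simp
  ultimately have "?tail (j - Suc n) < 1 / 2 ^ Suc (j - Suc n)"
    by simp
  moreover have "?tail i \<le> 1 / 2 ^ Suc i" for i
    using digit_le_1[of "i + Suc n"] by (simp add: divide_right_mono)
  moreover have "(\<lambda>i. 1 / 2 ^ Suc i :: real) sums 1"
    using power_half_series by (simp add: power_divide)
  ultimately have "2 ^ n * r - real (binary_prefix d n) < 1"
    by (intro sums_less[OF _ _ tail])
  then show "2 ^ n * r < real (binary_prefix d n) + 1"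
    by simp
qed

lemma concise_binary_expansion_binary_prefix_eq_iff:
  assumes "concise_binary_expansion d r"
  shows "2 ^ n * r = real (binary_prefix d n) \<longleftrightarrow> (\<forall>j>n. d j = 0)"
proof -
  let ?tail = "\<lambda>i. real (d (i + Suc n)) / 2 ^ Suc i"
  have tail: "?tail sums (2 ^ n * r - real (binary_prefix d n))"
    using assms by (rule concise_binary_expansion_scaled_tail_sums)
  have "2 ^ n * r = real (binary_prefix d n) \<longleftrightarrow> (\<forall>i. ?tail i = 0)"
    using tail suminf_eq_zero_iff[of ?tail] by (auto simp: sums_iff)
  also have "\<dots> \<longleftrightarrow> (\<forall>i. d (i + Suc n) = 0)"
    by simp
  also have "\<dots> \<longleftrightarrow> (\<forall>j>n. d j = 0)"
  proof
    assume "\<forall>i. d (i + Suc n) = 0"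
    then show "\<forall>j>n. d j = 0"
      by (metis Suc_le_eq le_add_diff_inverse2)
  qed auto
  finally show ?thesis .
qed

theorem propositionC1:
  fixes x y z :: real and xd yd zd :: "nat \<Rightarrow> nat" and l :: nat
  assumes "x \<in> {0..1}" and "y \<in> {0..1}" and "z \<in> {0..1}"
    and "z = x + y"
    and "concise_binary_expansion zd z"
    and "concise_binary_expansion xd x"
    and "concise_binary_expansion yd y"
    and "(xd l, yd l, zd l) \<in> {(0,0,0), (0,1,1), (1,0,1), (1,1,0)}"
    and "\<forall>j>l. zd j = 0"
  shows "\<forall>j>l. xd j = 0 \<and> yd j = 0"
proof -
  let ?X = "binary_prefix xd l" and ?Y = "binary_prefix yd l" and ?Z = "binary_prefix zd l"
  have "even (int ?Z - int ?X - int ?Y)"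
    using assms(8) by (auto simp: even_binary_prefix_iff)
  then obtain m where m: "int ?Z - int ?X - int ?Y = 2 * m" ..
  have "2 ^ l * z = real ?Z"
    using assms(5,9) concise_binary_expansion_binary_prefix_eq_iff by blast
  then have m_frac: "2 * real_of_int m = (2 ^ l * x - real ?X) + (2 ^ l * y - real ?Y)"
    using assms(4) m by (simp add: algebra_simps)
  note x_bounds = concise_binary_expansion_binary_prefix_bounds[OF assms(6), of l]
    and y_bounds = concise_binary_expansion_binary_prefix_bounds[OF assms(7), of l]
  then have "0 \<le> real_of_int m" and "real_of_int m < 1"
    using m_frac by linarith+
  then have "m = 0"
    by simp
  then have "2 ^ l * x = real ?X" and "2 ^ l * y = real ?Y"
    using m_frac x_bounds y_bounds by linarith+
  then show ?thesis
    using assms(6,7) concise_binary_expansion_binary_prefix_eq_iff by blast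
qed

end
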